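(* Let $X$ be a compact topological space, let $D\subseteq X$ with $D\neq\emptyset$, let $\overline{D}$ be the closure of $D$ in $X$, and put $\partial D:=\overline{D}\setminus D$. Let $Y$ be a Hausdorff topological space and let $f\colon\overline{D}\to Y$ be a continuous map such that $f(D)$ is open in $Y$. Let $E$ and $F$ be connected subsets of $Y$, let $\overline{F}$ denote the closure of $F$ in $Y$, and write $S^{c}:=Y\setminus S$ for $S\subseteq Y$. Then: (I) If $f(D)\subseteq E\subseteq f(\partial D)^{c}$, then $f(D)=E$. (II) If $E\subseteq f(\partial D)^{c}\subseteq E\cup F$, $f(D)\subseteq F^{c}$, and $f(\partial D)\subseteq \overline{F}$, then $f(D)=E$; moreover $E\neq\emptyset$, $E\cap F=\emptyset$, and $f(D)\subseteq f(\partial D)^{c}$. (III) If $f(\partial D)^{c}=E\cup F$, $F\not\subseteq f(D)$, and $f(\partial D)\subseteq\overline{F}$, then $f(D)=E$; moreover $E\neq\emptyset$, $F\neq\emptyset$, $E\cap F=\emptyset$, and $f(D)\subseteq f(\partial D)^{c}$.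
   Context: Note that $\partial D$ is defined as $\overline{D}\setminus D$; complements are taken in $Y$. *)

theory Defs
  imports "HOL-Analysis.Analysis"
begin

end

theory Submission
  imports Defs
begin

text \<open>The image of the compact set \<open>X closure_of D\<close> is compact, hence closed in the Hausdorff
space \<open>Y\<close>; so the frontier of the open set \<open>f ` D\<close> lies in \<open>f ` \<partial>D\<close>. A connected set avoiding
the frontier of an open set \<open>U\<close> lies inside \<open>U\<close> or outside it, and an open set
disjoint from \<open>F\<close> is disjoint from its closure; applied to \<open>U = f ` D\<close> and
\<open>B = f ` \<partial>D\<close> these give all three parts.\<close>

lemma closure_of_image_subset_image_closure_of:
  assumes "compact_space X" "Hausdorff_space Y" "D \<subseteq> topspace X"
    and "continuous_map (subtopology X (X closure_of D)) Y f"
  shows "Y closure_of (f ` D) \<subseteq> f ` (X closure_of D)"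
proof (rule closure_of_minimal)
  show "f ` D \<subseteq> f ` (X closure_of D)"
    using assms(3) closure_of_subset by (intro image_mono)
  have "compactin X (X closure_of D)"
    by (simp add: assms(1) closedin_compact_space)
  then have "compactin (subtopology X (X closure_of D)) (X closure_of D)"
    by (simp add: compactin_subtopology)
  then have "compactin Y (f ` (X closure_of D))"
    using assms(4) by (rule image_compactin)
  then show "closedin Y (f ` (X closure_of D))"
    by (rule compactin_imp_closedin[OF assms(2)])
qed

lemma frontier_of_open_image_subset_image_boundary:
  assumes "compact_space X" "Hausdorff_space Y" "D \<subseteq> topspace X"
    and "continuous_map (subtopology X (X closure_of D)) Y f" "openin Y (f ` D)"
  shows "Y frontier_of (f ` D) \<subseteq> f ` (X closure_of D - D)"
  using closure_of_image_subset_image_closure_of[OF assms(1-4)]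
  unfolding frontier_of_openin[OF assms(5)] by blast

lemma connectedin_subset_or_disjoint_avoiding_frontier_of:
  assumes "connectedin Y T" "T \<inter> Y frontier_of U = {}"
  shows "T \<subseteq> U \<or> T \<inter> U = {}"
  using connectedin_Int_frontier_of[OF assms(1)] assms(2) by blast

context
  fixes Y :: "'b topology" and U B :: "'b set"
  assumes U_open: "openin Y U" and U_nonempty: "U \<noteq> {}"
    and frontier_in_B: "Y frontier_of U \<subseteq> B"
begin

lemma openin_eq_connectedin_between:
  assumes "connectedin Y E" "U \<subseteq> E" "E \<subseteq> topspace Y - B"
  shows "U = E"
  using connectedin_subset_or_disjoint_avoiding_frontier_of[of Y E U] assms frontier_in_B U_nonempty
  by blast

lemma openin_subset_complement_boundary:
  assumes "U \<subseteq> topspace Y - F" "B \<subseteq> Y closure_of F"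
  shows "U \<subseteq> topspace Y - B"
proof -
  have "U \<inter> Y closure_of F = {}"
    using openin_Int_closure_of_eq_empty[OF U_open] assms(1) by blast
  then show ?thesis
    using openin_subset[OF U_open] assms(2) by blast
qed

lemma openin_eq_connectedin_separated:
  assumes "connectedin Y E" "E \<subseteq> topspace Y - B" "topspace Y - B \<subseteq> E \<union> F"
    and "U \<subseteq> topspace Y - F" "B \<subseteq> Y closure_of F"
  shows "U = E \<and> E \<noteq> {} \<and> E \<inter> F = {} \<and> U \<subseteq> topspace Y - B"
proof -
  have "U \<subseteq> topspace Y - B"
    using openin_subset_complement_boundary assms(4,5) .
  then have "U \<subseteq> E"
    using assms(3,4) by blast
  then have "U = E"
    using openin_eq_connectedin_between assms(1,2) by blast
  then show ?thesis
    using \<open>U \<subseteq> topspace Y - B\<close> assms(4) U_nonempty by blast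
qed

lemma openin_eq_connectedin_complement_split:
  assumes "connectedin Y E" "connectedin Y F" "topspace Y - B = E \<union> F"
    and "\<not> F \<subseteq> U" "B \<subseteq> Y closure_of F"
  shows "U = E \<and> E \<noteq> {} \<and> F \<noteq> {} \<and> E \<inter> F = {} \<and> U \<subseteq> topspace Y - B"
proof -
  have "F \<inter> Y frontier_of U = {}"
    using assms(3) frontier_in_B by blast
  then have "U \<subseteq> topspace Y - F"
    using connectedin_subset_or_disjoint_avoiding_frontier_of[OF assms(2)] assms(4) openin_subset[OF U_open]
    by blast
  moreover have "topspace Y - B \<subseteq> E \<union> F" "E \<subseteq> topspace Y - B"
    using assms(3) by auto
  ultimately show ?thesis
    using openin_eq_connectedin_separated[OF assms(1)] assms(4,5) by blast
qed

end

theorem mainTheorem3: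
  fixes X :: "'a topology" and Y :: "'b topology"
    and D :: "'a set" and f :: "'a \<Rightarrow> 'b" and E F :: "'b set"
  assumes "compact_space X"
    and "D \<subseteq> topspace X" and "D \<noteq> {}"
    and "Hausdorff_space Y"
    and "continuous_map (subtopology X (X closure_of D)) Y f"
    and "openin Y (f ` D)"
    and "connectedin Y E" and "connectedin Y F"
  shows "(f ` D \<subseteq> E \<and> E \<subseteq> topspace Y - f ` (X closure_of D - D)
            \<longrightarrow> f ` D = E)
    \<and> (E \<subseteq> topspace Y - f ` (X closure_of D - D)
         \<and> topspace Y - f ` (X closure_of D - D) \<subseteq> E \<union> F
         \<and> f ` D \<subseteq> topspace Y - F
         \<and> f ` (X closure_of D - D) \<subseteq> Y closure_of F
         \<longrightarrow> f ` D = E \<and> E \<noteq> {} \<and> E \<inter> F = {}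
             \<and> f ` D \<subseteq> topspace Y - f ` (X closure_of D - D))
    \<and> (topspace Y - f ` (X closure_of D - D) = E \<union> F
         \<and> \<not> F \<subseteq> f ` D
         \<and> f ` (X closure_of D - D) \<subseteq> Y closure_of F
         \<longrightarrow> f ` D = E \<and> E \<noteq> {} \<and> F \<noteq> {} \<and> E \<inter> F = {}
             \<and> f ` D \<subseteq> topspace Y - f ` (X closure_of D - D))"
proof -
  have frontier: "Y frontier_of (f ` D) \<subseteq> f ` (X closure_of D - D)"
    using frontier_of_open_image_subset_image_boundary assms(1,4,2,5,6) .
  have "f ` D \<noteq> {}"
    using assms(3) by blast
  note U = assms(6) this frontier
  show ?thesis
    using openin_eq_connectedin_between[OF U assms(7)]
      openin_eq_connectedin_separated[OF U assms(7), of F]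
      openin_eq_connectedin_complement_split[OF U assms(7,8)]
    by meson
qed

end
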